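(* Let $H=(h_{ij})=(N^{-1/2}x_{ij})$ be a generalized symmetric Wigner matrix such that, for some constant $C_1>0$ and all $1\le i<j\le N$, $\mathbb{E}|h_{ii}|^2\le C_1/N$, $\mathbb{E}|h_{ij}|^2=1/N$, $\mathbb{E}|h_{ij}|^3\le C_1N^{-3/2}$, $\mathbb{E}|h_{ij}|^4\le C_1(\log N)N^{-2}$, and $H$ satisfies the bounded support condition with $q=N^{\phi}$ for some constant $\phi>0$. Then there exists another generalized symmetric Wigner matrix $\widetilde H=(N^{-1/2}\widetilde x_{ij})$ satisfying the bounded support condition with some $q\ge cN^{1/2}/\log N$ ($c>0$ a constant), such that $$\mathbb{E}x_{ij}^k=\mathbb{E}\widetilde x_{ij}^k\quad(i\ne j,\ k=1,2,3,4),\qquad \mathbb{E}x_{ii}^k=\mathbb{E}\widetilde x_{ii}^k\quad(k=1,2).$$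
   Context: A generalized symmetric Wigner matrix of size $N$ is a real symmetric matrix $H=(h_{ij})$ whose upper-triangular entries are independent real centered random variables (distributions may depend on $i,j,N$) with $|\mathbb{E}h_{ij}^2-N^{-1}|\le C_0N^{-1}\delta_{ij}$ for a constant $C_0$. The bounded support condition with $q$: for all $i,j$, $|h_{ij}|\le q^{-1}$ with probability at least $1-e^{-N^c}$ for some constant $c>0$. *)

theory Defs
  imports "HOL-Probability.Probability"
begin

text \<open>A (sequence of) generalized symmetric Wigner matrices is represented by the
laws of its upper-triangular entries: mu N i j is the distribution of h_ij
for the N x N matrix, 0 <= i <= j < N. The entries are independent, so the
joint law is the product of these marginals.\<close>

definition gen_wigner :: "(nat \<Rightarrow> nat \<Rightarrow> nat \<Rightarrow> real measure) \<Rightarrow> bool" where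
  "gen_wigner mu \<longleftrightarrow>
     (\<forall>N i j. i \<le> j \<and> j < N \<longrightarrow>
        prob_space (mu N i j) \<and> sets (mu N i j) = sets borel \<and>
        integrable (mu N i j) (\<lambda>x. x) \<and> integrable (mu N i j) (\<lambda>x. x ^ 2) \<and>
        (\<integral>x. x \<partial>(mu N i j)) = 0) \<and>
     (\<exists>C0. \<forall>N i j. i \<le> j \<and> j < N \<longrightarrow>
        \<bar>(\<integral>x. x ^ 2 \<partial>(mu N i j)) - 1 / real N\<bar> \<le> C0 / real N * (if i = j then 1 else 0))"

definition bounded_support :: "(nat \<Rightarrow> nat \<Rightarrow> nat \<Rightarrow> real measure) \<Rightarrow> (nat \<Rightarrow> real) \<Rightarrow> bool" where
  "bounded_support mu q \<longleftrightarrow>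
     (\<exists>c>0. \<forall>N i j. i \<le> j \<and> j < N \<longrightarrow>
        measure (mu N i j) {x. \<bar>x\<bar> \<le> inverse (q N)} \<ge> 1 - exp (- (real N powr c)))"

end

theory Submission
  imports Defs
begin

(* Pearson's inequality E X^4 >= 1 + (E X^3)^2 for a standardized variable X is exactly what is
   needed to realise the moments (0, 1, s, k) of an off-diagonal entry x_ij by a law with at most
   five atoms. With weight w = (1 + s^2) / k take the two-point law on {a, -b} with a b = 1 and
   a - b = s / w, whose moments are (0, 1, s / w, (s / w)^2 + 1); with weight 1 - w take the
   symmetric law on {-R, 0, R} with R^2 = 1 + k / (1 + s^2), whose moments are (0, 1, 0, R^2).
   All atoms are bounded by 1 + k = O(log N), so the new entries are O(log N / sqrt N), which
   gives q of order sqrt N / log N. A diagonal entry only needs its first two moments and is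
   replaced by the symmetric two-point law on {-sqrt (E x_ii^2), sqrt (E x_ii^2)}. *)

section \<open>Finitely supported laws with prescribed moments\<close>

definition pmf_moment :: "real pmf \<Rightarrow> nat \<Rightarrow> real" where
  "pmf_moment D n = measure_pmf.expectation D (\<lambda>x. x ^ n)"

definition bounded_finite_pmf :: "real \<Rightarrow> real pmf \<Rightarrow> bool" where
  "bounded_finite_pmf L D \<longleftrightarrow> finite (set_pmf D) \<and> (\<forall>x\<in>set_pmf D. \<bar>x\<bar> \<le> L)"

definition two_point_pmf :: "real \<Rightarrow> 'a \<Rightarrow> 'a \<Rightarrow> 'a pmf" where
  "two_point_pmf p a b = map_pmf (\<lambda>c. if c then a else b) (bernoulli_pmf p)"

definition mixture_pmf :: "real \<Rightarrow> 'a pmf \<Rightarrow> 'a pmf \<Rightarrow> 'a pmf" where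
  "mixture_pmf w P Q = bernoulli_pmf w \<bind> (\<lambda>c. if c then P else Q)"

lemma bounded_finite_pmf_mono:
  "bounded_finite_pmf L D \<Longrightarrow> L \<le> L' \<Longrightarrow> bounded_finite_pmf L' D"
  by (auto simp: bounded_finite_pmf_def)

lemma bounded_finite_two_point_pmf:
  "\<bar>a\<bar> \<le> L \<Longrightarrow> \<bar>b\<bar> \<le> L \<Longrightarrow> bounded_finite_pmf L (two_point_pmf p a b)"
  by (auto simp: bounded_finite_pmf_def two_point_pmf_def)

lemma bounded_finite_mixture_pmf:
  "bounded_finite_pmf L P \<Longrightarrow> bounded_finite_pmf L Q \<Longrightarrow> bounded_finite_pmf L (mixture_pmf w P Q)"
  by (auto simp: bounded_finite_pmf_def mixture_pmf_def)

lemma pmf_moment_two_point_pmf: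
  "0 \<le> p \<Longrightarrow> p \<le> 1 \<Longrightarrow> pmf_moment (two_point_pmf p a b) n = p * a ^ n + (1 - p) * b ^ n"
  by (simp add: pmf_moment_def two_point_pmf_def)

lemma pmf_moment_mixture_pmf:
  assumes "0 \<le> w" "w \<le> 1" "bounded_finite_pmf L P" "bounded_finite_pmf L Q"
  shows "pmf_moment (mixture_pmf w P Q) n = w * pmf_moment P n + (1 - w) * pmf_moment Q n"
  using assms unfolding pmf_moment_def mixture_pmf_def bounded_finite_pmf_def
  by (subst pmf_expectation_bind[of UNIV]) (auto simp: UNIV_bool)

lemma pmf_moments_skewed_two_point_pmf:
  fixes a b :: real
  assumes "0 < a" "0 < b"
  defines "D \<equiv> two_point_pmf (b / (a + b)) a (- b)"
  shows "pmf_moment D 1 = 0" "pmf_moment D 2 = a * b"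
    "pmf_moment D 3 = a * b * (a - b)" "pmf_moment D 4 = a * b * ((a - b)^2 + a * b)"
proof -
  have "1 - b / (a + b) = a / (a + b)"
    using assms by (simp add: field_simps)
  then have "pmf_moment D n = (b * a ^ n + a * (- b) ^ n) / (a + b)" for n
    using assms unfolding D_def by (simp add: pmf_moment_two_point_pmf add_divide_distrib)
  moreover have "b * a ^ 2 + a * (- b) ^ 2 = a * b * (a + b)"
    and "b * a ^ 3 + a * (- b) ^ 3 = a * b * (a - b) * (a + b)"
    and "b * a ^ 4 + a * (- b) ^ 4 = a * b * ((a - b)^2 + a * b) * (a + b)"
    by (simp_all add: algebra_simps power2_eq_square power3_eq_cube eval_nat_numeral)
  ultimately show "pmf_moment D 1 = 0" "pmf_moment D 2 = a * b"
    "pmf_moment D 3 = a * b * (a - b)" "pmf_moment D 4 = a * b * ((a - b)^2 + a * b)"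
    using assms by simp_all
qed

lemma exists_two_point_pmf_standardized:
  "\<exists>D. bounded_finite_pmf (\<bar>u\<bar> + 1) D \<and> pmf_moment D 1 = 0 \<and> pmf_moment D 2 = 1 \<and>
     pmf_moment D 3 = u \<and> pmf_moment D 4 = u^2 + 1"
proof -
  define r where "r = sqrt (u^2 + 4)"
  define a where "a = (r + u) / 2"
  define b where "b = (r - u) / 2"
  have r2: "r^2 = u^2 + 4"
    unfolding r_def by simp
  have "\<bar>u\<bar> < r" "r \<le> \<bar>u\<bar> + 2"
    unfolding r_def by (auto intro!: real_less_rsqrt real_le_lsqrt simp: power2_eq_square algebra_simps)
  then have ab: "0 < a" "0 < b" "a \<le> \<bar>u\<bar> + 1" "b \<le> \<bar>u\<bar> + 1"
    unfolding a_def b_def by auto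
  have "a * b = 1" "a - b = u"
    using r2 unfolding a_def b_def by (simp_all add: field_simps power2_eq_square)
  with pmf_moments_skewed_two_point_pmf[OF ab(1,2)] ab show ?thesis
    by (intro exI[of _ "two_point_pmf (b / (a + b)) a (- b)"]) (simp add: bounded_finite_two_point_pmf)
qed

lemma exists_symmetric_pmf_standardized:
  assumes "1 \<le> m"
  shows "\<exists>D. bounded_finite_pmf (sqrt m) D \<and> pmf_moment D 1 = 0 \<and> pmf_moment D 2 = 1 \<and>
     pmf_moment D 3 = 0 \<and> pmf_moment D 4 = m"
proof -
  define D where "D = mixture_pmf (1 / m) (two_point_pmf (1 / 2) (sqrt m) (- sqrt m)) (return_pmf 0)"
  have bounded: "bounded_finite_pmf (sqrt m) (two_point_pmf (1 / 2) (sqrt m) (- sqrt m))"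
    "bounded_finite_pmf (sqrt m) (return_pmf 0)"
    using assms by (simp_all add: bounded_finite_two_point_pmf) (simp add: bounded_finite_pmf_def)
  have "pmf_moment D n = (sqrt m ^ n + (- sqrt m) ^ n) / (2 * m) + (1 - 1 / m) * 0 ^ n" for n
    using assms unfolding D_def
    by (simp add: pmf_moment_mixture_pmf[OF _ _ bounded] pmf_moment_two_point_pmf)
      (simp add: pmf_moment_def field_simps)
  moreover have "sqrt m ^ 4 = m^2"
    using assms power_mult[of "sqrt m" 2 2] by simp
  ultimately show ?thesis
    using assms bounded by (intro exI[of _ D]) (simp add: D_def bounded_finite_mixture_pmf power2_eq_square)
qed

lemma exists_symmetric_two_point_pmf:
  assumes "0 \<le> v"
  shows "\<exists>D. bounded_finite_pmf (sqrt v) D \<and> pmf_moment D 1 = 0 \<and> pmf_moment D 2 = v"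
  using assms
  by (intro exI[of _ "two_point_pmf (1 / 2) (sqrt v) (- sqrt v)"])
    (simp add: bounded_finite_two_point_pmf pmf_moment_two_point_pmf)

lemma exists_pmf_with_four_moments:
  assumes "1 + s^2 \<le> k"
  shows "\<exists>D. bounded_finite_pmf (1 + k) D \<and> pmf_moment D 1 = 0 \<and> pmf_moment D 2 = 1 \<and>
     pmf_moment D 3 = s \<and> pmf_moment D 4 = k"
proof -
  define c where "c = 1 + s^2"
  define w where "w = c / k"
  have c: "1 \<le> c" "c \<le> k"
    using assms unfolding c_def by simp_all
  then have w: "0 < w" "w \<le> 1"
    unfolding w_def by simp_all
  obtain D1 where D1: "bounded_finite_pmf (\<bar>s / w\<bar> + 1) D1" "pmf_moment D1 1 = 0"
    "pmf_moment D1 2 = 1" "pmf_moment D1 3 = s / w" "pmf_moment D1 4 = (s / w)^2 + 1"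
    using exists_two_point_pmf_standardized by blast
  obtain D2 where D2: "bounded_finite_pmf (sqrt (1 + k / c)) D2" "pmf_moment D2 1 = 0"
    "pmf_moment D2 2 = 1" "pmf_moment D2 3 = 0" "pmf_moment D2 4 = 1 + k / c"
    using exists_symmetric_pmf_standardized[of "1 + k / c"] c by auto
  have "0 \<le> (\<bar>s\<bar> - 1)^2"
    by simp
  then have "\<bar>s\<bar> \<le> c"
    unfolding c_def by (simp add: power2_eq_square algebra_simps)
  have "\<bar>s / w\<bar> = \<bar>s\<bar> * (k / c)"
    using c unfolding w_def by (simp add: abs_mult)
  also have "\<dots> \<le> c * (k / c)"
    using \<open>\<bar>s\<bar> \<le> c\<close> c by (intro mult_right_mono) auto
  finally have "\<bar>s / w\<bar> + 1 \<le> 1 + k"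
    using c by simp
  moreover have "sqrt (1 + k / c) \<le> 1 + k"
  proof (rule real_le_lsqrt)
    have "k / c \<le> k"
      using c divide_left_mono[of 1 c k] by simp
    moreover have "1 + k \<le> (1 + k)^2"
      using c power_increasing[of 1 2 "1 + k"] by simp
    ultimately show "1 + k / c \<le> (1 + k)^2"
      by simp
  qed (use c in simp)
  ultimately have bounded: "bounded_finite_pmf (1 + k) D1" "bounded_finite_pmf (1 + k) D2"
    using D1(1) D2(1) bounded_finite_pmf_mono by blast+
  have "w * ((s / w)^2 + 1) + (1 - w) * (1 + k / c) = (1 + s^2) * k / c"
    using c unfolding w_def by (simp add: field_simps power2_eq_square)
  also have "\<dots> = k"
    using c by (simp flip: c_def)
  finally show ?thesis
    using w D1 D2 bounded
    by (intro exI[of _ "mixture_pmf w D1 D2"])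
      (simp add: pmf_moment_mixture_pmf[OF _ _ bounded] bounded_finite_mixture_pmf)
qed

section \<open>Pearson's inequality\<close>

lemma abs_power_le_one_plus_power:
  fixes y :: real
  assumes "n \<le> m"
  shows "\<bar>y\<bar> ^ n \<le> 1 + \<bar>y\<bar> ^ m"
proof (cases "\<bar>y\<bar> \<le> 1")
  case True
  then have "\<bar>y\<bar> ^ n \<le> 1"
    by (simp add: power_le_one)
  then show ?thesis
    by (simp add: add_increasing2)
next
  case False
  then have "\<bar>y\<bar> ^ n \<le> \<bar>y\<bar> ^ m"
    by (intro power_increasing[OF assms]) simp
  then show ?thesis
    by simp
qed

lemma (in finite_measure) integrable_lower_power:
  fixes X :: "'a \<Rightarrow> real"
  assumes "X \<in> borel_measurable M" "integrable M (\<lambda>\<omega>. X \<omega> ^ m)" "n \<le> m"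
  shows "integrable M (\<lambda>\<omega>. X \<omega> ^ n)"
proof (rule Bochner_Integration.integrable_bound)
  show "integrable M (\<lambda>\<omega>. 1 + \<bar>X \<omega> ^ m\<bar>)"
    using assms(2) by auto
  show "AE \<omega> in M. norm (X \<omega> ^ n) \<le> norm (1 + \<bar>X \<omega> ^ m\<bar>)"
    using abs_power_le_one_plus_power[OF assms(3)] by (simp add: power_abs)
qed (use assms(1) in simp)

lemma (in prob_space) pearson_moment_inequality:
  fixes X :: "'a \<Rightarrow> real"
  assumes X: "random_variable borel X" and X4: "integrable M (\<lambda>\<omega>. X \<omega> ^ 4)"
    and mean: "expectation X = 0" and variance: "expectation (\<lambda>\<omega>. X \<omega> ^ 2) = 1"
  shows "1 + (expectation (\<lambda>\<omega>. X \<omega> ^ 3))^2 \<le> expectation (\<lambda>\<omega>. X \<omega> ^ 4)"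
proof -
  define s where "s = expectation (\<lambda>\<omega>. X \<omega> ^ 3)"
  have [simp]: "integrable M (\<lambda>\<omega>. X \<omega> ^ n)" if "n \<le> 4" for n
    using integrable_lower_power[OF X X4 that] .
  have [simp]: "integrable M X"
    using integrable_lower_power[OF X X4, of 1] by simp
  have expand: "(X \<omega> ^ 2 - s * X \<omega> - 1)^2 =
      X \<omega> ^ 4 - 2 * s * X \<omega> ^ 3 + (s^2 - 2) * X \<omega> ^ 2 + 2 * s * X \<omega> + 1" for \<omega>
    by (simp add: algebra_simps power2_eq_square power3_eq_cube eval_nat_numeral)
  have "expectation (\<lambda>\<omega>. (X \<omega> ^ 2 - s * X \<omega> - 1)^2) =
      expectation (\<lambda>\<omega>. X \<omega> ^ 4) - 2 * s * s + (s^2 - 2) * 1 + 2 * s * 0 + 1"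
    unfolding expand using mean variance by (simp add: s_def prob_space)
  also have "\<dots> = expectation (\<lambda>\<omega>. X \<omega> ^ 4) - s^2 - 1"
    by (simp add: power2_eq_square)
  finally have "expectation (\<lambda>\<omega>. (X \<omega> ^ 2 - s * X \<omega> - 1)^2) = expectation (\<lambda>\<omega>. X \<omega> ^ 4) - s^2 - 1" .
  moreover have "0 \<le> expectation (\<lambda>\<omega>. (X \<omega> ^ 2 - s * X \<omega> - 1)^2)"
    by simp
  ultimately show ?thesis
    unfolding s_def by simp
qed

section \<open>Replacement laws for single entries\<close>

text \<open>Pushed forward to the Borel sets: measure_pmf D makes every set measurable, whereas
  gen_wigner asks for sets borel.\<close>

definition scaled_law :: "real \<Rightarrow> real pmf \<Rightarrow> real measure" where
  "scaled_law \<sigma> D = distr (measure_pmf D) borel (\<lambda>x. x / \<sigma>)"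

lemma prob_space_scaled_law: "prob_space (scaled_law \<sigma> D)"
  unfolding scaled_law_def by (rule measure_pmf.prob_space_distr) simp

lemma sets_scaled_law [simp]: "sets (scaled_law \<sigma> D) = sets borel"
  by (simp add: scaled_law_def)

lemma integrable_scaled_law:
  fixes f :: "real \<Rightarrow> real"
  assumes "bounded_finite_pmf L D" "f \<in> borel_measurable borel"
  shows "integrable (scaled_law \<sigma> D) f"
  using assms integrable_measure_pmf_finite[of D "\<lambda>x. f (x / \<sigma>)"]
  by (simp add: scaled_law_def integrable_distr_eq bounded_finite_pmf_def)

lemma scaled_moment_scaled_law:
  "\<sigma> \<noteq> 0 \<Longrightarrow> (\<integral>x. (\<sigma> * x) ^ n \<partial>scaled_law \<sigma> D) = pmf_moment D n"
  by (simp add: scaled_law_def integral_distr pmf_moment_def)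

lemma measure_scaled_law_bounded:
  assumes "bounded_finite_pmf L D" "0 < \<sigma>"
  shows "measure (scaled_law \<sigma> D) {x. \<bar>x\<bar> \<le> L / \<sigma>} = 1"
proof -
  have "{x. \<bar>x\<bar> \<le> L / \<sigma>} \<in> sets borel"
    by measurable
  then have "measure (scaled_law \<sigma> D) {x. \<bar>x\<bar> \<le> L / \<sigma>} = measure_pmf.prob D {x. \<bar>x\<bar> \<le> L}"
    using assms(2) by (simp add: scaled_law_def measure_distr divide_le_cancel)
  also have "\<dots> = 1"
    using assms(1) by (simp add: bounded_finite_pmf_def measure_pmf.prob_eq_1 AE_measure_pmf_iff)
  finally show ?thesis .
qed

lemma exists_bounded_pmf_matching_four_moments:
  fixes M :: "real measure"
  assumes "prob_space M" "sets M = sets borel" "integrable M (\<lambda>x. x ^ 4)"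
    and "(\<integral>x. x \<partial>M) = 0" "(\<integral>x. (\<sigma> * x)^2 \<partial>M) = 1" "(\<integral>x. (\<sigma> * x)^4 \<partial>M) \<le> K"
  shows "\<exists>D. bounded_finite_pmf (1 + K) D \<and> (\<forall>n\<in>{1,2,3,4}. pmf_moment D n = (\<integral>x. (\<sigma> * x)^n \<partial>M))"
proof -
  interpret prob_space M by fact
  have "1 + (\<integral>x. (\<sigma> * x)^3 \<partial>M)^2 \<le> (\<integral>x. (\<sigma> * x)^4 \<partial>M)"
    using assms(2-5) measurable_cong_sets[OF assms(2) refl]
    by (intro pearson_moment_inequality) (simp_all add: power_mult_distrib)
  then obtain D where "bounded_finite_pmf (1 + (\<integral>x. (\<sigma> * x)^4 \<partial>M)) D" "pmf_moment D 1 = 0"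
    "pmf_moment D 2 = 1" "pmf_moment D 3 = (\<integral>x. (\<sigma> * x)^3 \<partial>M)" "pmf_moment D 4 = (\<integral>x. (\<sigma> * x)^4 \<partial>M)"
    using exists_pmf_with_four_moments by blast
  with assms(4-6) show ?thesis
    by (intro exI[of _ D]) (auto intro: bounded_finite_pmf_mono)
qed

lemma exists_bounded_pmf_matching_two_moments:
  fixes M :: "real measure"
  assumes "(\<integral>x. x \<partial>M) = 0" "(\<integral>x. (\<sigma> * x)^2 \<partial>M) \<le> V"
  shows "\<exists>D. bounded_finite_pmf (sqrt V) D \<and> (\<forall>n\<in>{1,2}. pmf_moment D n = (\<integral>x. (\<sigma> * x)^n \<partial>M))"
proof -
  have "0 \<le> (\<integral>x. (\<sigma> * x)^2 \<partial>M)"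
    by simp
  then obtain D where "bounded_finite_pmf (sqrt (\<integral>x. (\<sigma> * x)^2 \<partial>M)) D" "pmf_moment D 1 = 0"
    "pmf_moment D 2 = (\<integral>x. (\<sigma> * x)^2 \<partial>M)"
    using exists_symmetric_two_point_pmf by blast
  with assms show ?thesis
    by (intro exI[of _ D]) (auto intro: bounded_finite_pmf_mono)
qed

lemma gen_wigner_if_moments_match:
  assumes "gen_wigner mu"
    and "\<And>N i j. i \<le> j \<Longrightarrow> j < N \<Longrightarrow> prob_space (nu N i j) \<and> sets (nu N i j) = sets borel \<and>
      integrable (nu N i j) (\<lambda>x. x) \<and> integrable (nu N i j) (\<lambda>x. x ^ 2)"
    and "\<And>N i j n. i \<le> j \<Longrightarrow> j < N \<Longrightarrow> n \<in> {1, 2} \<Longrightarrow>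
      (\<integral>x. (sqrt (real N) * x) ^ n \<partial>nu N i j) = (\<integral>x. (sqrt (real N) * x) ^ n \<partial>mu N i j)"
  shows "gen_wigner nu"
proof -
  have "(\<integral>x. x ^ n \<partial>nu N i j) = (\<integral>x. x ^ n \<partial>mu N i j)"
    if "i \<le> j" "j < N" "n \<in> {1, 2}" for N i j n
    using assms(3)[OF that] that(2) by (simp add: power_mult_distrib)
  from this[of _ _ _ 1] this[of _ _ _ 2] assms(1,2) show ?thesis
    unfolding gen_wigner_def by auto
qed

lemma bounded_support_if_bounded_entries:
  assumes "\<And>N i j. i \<le> j \<Longrightarrow> j < N \<Longrightarrow> measure (nu N i j) {x. \<bar>x\<bar> \<le> inverse (q N)} = 1"
  shows "bounded_support nu q"
  unfolding bounded_support_def using assms by (intro exI[of _ 1]) auto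

lemma sqrt_div_max_one_ln_lower_bound:
  fixes B :: real
  assumes "0 < B"
  shows "ln 2 / B * sqrt (real N) / ln (real N) \<le> sqrt (real N) / (B * max 1 (ln (real N)))"
proof (cases "N \<le> 1")
  case True
  then have "ln (real N) = 0"
    by (cases N) auto
  with assms show ?thesis
    by simp
next
  case False
  then have "ln 2 \<le> ln (real N)"
    by simp
  then have "ln 2 * max 1 (ln (real N)) \<le> ln (real N)"
    using ln_2_less_1 by (auto simp: max_def intro: order_trans[OF mult_left_le_one_le])
  with assms False show ?thesis
    by (simp add: field_simps)
qed

section \<open>The replacement matrix\<close>

locale wigner_moment_bounds =
  fixes mu :: "nat \<Rightarrow> nat \<Rightarrow> nat \<Rightarrow> real measure" and C1 :: real
  assumes wig: "gen_wigner mu"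
    and C1: "C1 > 0"
    and int4: "\<And>N i j. i < j \<Longrightarrow> j < N \<Longrightarrow> integrable (mu N i j) (\<lambda>x. x ^ 4)"
    and diag2: "\<And>N i. i < N \<Longrightarrow> (\<integral>x. \<bar>x\<bar> ^ 2 \<partial>(mu N i i)) \<le> C1 / real N"
    and off2: "\<And>N i j. i < j \<Longrightarrow> j < N \<Longrightarrow> (\<integral>x. \<bar>x\<bar> ^ 2 \<partial>(mu N i j)) = 1 / real N"
    and off4: "\<And>N i j. i < j \<Longrightarrow> j < N \<Longrightarrow>
                 (\<integral>x. \<bar>x\<bar> ^ 4 \<partial>(mu N i j)) \<le> C1 * ln (real N) * real N powr (-2)"
begin

lemma entry_law:
  assumes "i \<le> j" "j < N"
  shows "prob_space (mu N i j)" "sets (mu N i j) = sets borel" "(\<integral>x. x \<partial>mu N i j) = 0"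
  using wig assms unfolding gen_wigner_def by blast+

definition entry_bound :: "nat \<Rightarrow> real" where
  "entry_bound N = (1 + C1) * max 1 (ln (real N))"

definition matched_moment_orders :: "nat \<Rightarrow> nat \<Rightarrow> nat set" where
  "matched_moment_orders i j = (if i < j then {1, 2, 3, 4} else {1, 2})"

definition matching_law :: "nat \<Rightarrow> nat \<Rightarrow> nat \<Rightarrow> real pmf \<Rightarrow> bool" where
  "matching_law N i j D \<longleftrightarrow> bounded_finite_pmf (entry_bound N) D \<and>
     (\<forall>n\<in>matched_moment_orders i j. pmf_moment D n = (\<integral>x. (sqrt (real N) * x) ^ n \<partial>mu N i j))"

lemma exists_matching_law_off_diagonal:
  assumes "i < j" "j < N"
  shows "\<exists>D. matching_law N i j D"
proof -
  have "(\<integral>x. (sqrt (real N) * x)^2 \<partial>mu N i j) = 1"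
    using off2[OF assms] assms(2) by (simp add: power_mult_distrib)
  moreover have "(\<integral>x. (sqrt (real N) * x)^4 \<partial>mu N i j) \<le> C1 * ln (real N)"
    using off4[OF assms] assms(2) power_mult[of "sqrt (real N)" 2 2]
    by (simp add: powr_minus powr_realpow field_simps)
  ultimately obtain D where D: "bounded_finite_pmf (1 + C1 * ln (real N)) D"
    "\<forall>n\<in>{1,2,3,4}. pmf_moment D n = (\<integral>x. (sqrt (real N) * x) ^ n \<partial>mu N i j)"
    using exists_bounded_pmf_matching_four_moments[OF entry_law(1,2) int4 entry_law(3)] assms
    by (metis order_less_imp_le)
  have "C1 * ln (real N) \<le> C1 * max 1 (ln (real N))"
    using C1 by (intro mult_left_mono) auto
  then have "1 + C1 * ln (real N) \<le> entry_bound N"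
    unfolding entry_bound_def by (simp add: distrib_right)
  with D assms(1) show ?thesis
    unfolding matching_law_def matched_moment_orders_def by (auto intro: bounded_finite_pmf_mono)
qed

lemma exists_matching_law_diagonal:
  assumes "i < N"
  shows "\<exists>D. matching_law N i i D"
proof -
  have "(\<integral>x. (sqrt (real N) * x)^2 \<partial>mu N i i) \<le> C1"
    using diag2[OF assms] assms by (simp add: field_simps)
  then obtain D where D: "bounded_finite_pmf (sqrt C1) D"
    "\<forall>n\<in>{1,2}. pmf_moment D n = (\<integral>x. (sqrt (real N) * x) ^ n \<partial>mu N i i)"
    using exists_bounded_pmf_matching_two_moments entry_law(3)[of i i N] assms by blast
  have "sqrt C1 \<le> 1 + C1"
    using C1 by (intro real_le_lsqrt) (simp_all add: power2_eq_square algebra_simps)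
  also have "\<dots> \<le> entry_bound N"
    using C1 unfolding entry_bound_def by (simp add: mult_left_le)
  finally show ?thesis
    using D unfolding matching_law_def matched_moment_orders_def by (auto intro: bounded_finite_pmf_mono)
qed

definition replacement_pmf :: "nat \<Rightarrow> nat \<Rightarrow> nat \<Rightarrow> real pmf" where
  "replacement_pmf N i j = (SOME D. matching_law N i j D)"

definition replacement :: "nat \<Rightarrow> nat \<Rightarrow> nat \<Rightarrow> real measure" where
  "replacement N i j = scaled_law (sqrt (real N)) (replacement_pmf N i j)"

lemma matching_law_replacement_pmf:
  assumes "i \<le> j" "j < N"
  shows "matching_law N i j (replacement_pmf N i j)"
proof -
  have "\<exists>D. matching_law N i j D"
    using assms exists_matching_law_off_diagonal exists_matching_law_diagonal
    by (cases "i < j") auto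
  then show ?thesis
    unfolding replacement_pmf_def by (rule someI_ex)
qed

lemma replacement_moments:
  assumes "i \<le> j" "j < N" "n \<in> matched_moment_orders i j"
  shows "(\<integral>x. (sqrt (real N) * x) ^ n \<partial>replacement N i j) = (\<integral>x. (sqrt (real N) * x) ^ n \<partial>mu N i j)"
  using matching_law_replacement_pmf[OF assms(1,2)] assms scaled_moment_scaled_law[of "sqrt (real N)"]
  by (simp add: replacement_def matching_law_def)

lemma integrable_replacement:
  fixes f :: "real \<Rightarrow> real"
  assumes "i \<le> j" "j < N" "f \<in> borel_measurable borel"
  shows "integrable (replacement N i j) f"
  using matching_law_replacement_pmf[OF assms(1,2)] assms(3)
  unfolding replacement_def matching_law_def by (blast intro: integrable_scaled_law)

lemma gen_wigner_replacement: "gen_wigner replacement"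
proof (rule gen_wigner_if_moments_match[OF wig])
  show "prob_space (replacement N i j) \<and> sets (replacement N i j) = sets borel \<and>
      integrable (replacement N i j) (\<lambda>x. x) \<and> integrable (replacement N i j) (\<lambda>x. x ^ 2)"
    if "i \<le> j" "j < N" for N i j
  proof (intro conjI)
    show "prob_space (replacement N i j)"
      unfolding replacement_def by (rule prob_space_scaled_law)
    show "integrable (replacement N i j) (\<lambda>x. x)" "integrable (replacement N i j) (\<lambda>x. x ^ 2)"
      by (rule integrable_replacement[OF that]; simp)+
  qed (simp add: replacement_def)
qed (auto intro: replacement_moments simp: matched_moment_orders_def)

text \<open>At N = 0 there are no entries; the value 1 only keeps the rate positive.\<close>

definition support_rate :: "nat \<Rightarrow> real" where
  "support_rate N = (if N = 0 then 1 else sqrt (real N) / entry_bound N)"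

lemma bounded_support_replacement: "bounded_support replacement support_rate"
proof (rule bounded_support_if_bounded_entries)
  fix N i j :: nat
  assume "i \<le> j" "j < N"
  then show "measure (replacement N i j) {x. \<bar>x\<bar> \<le> inverse (support_rate N)} = 1"
    using measure_scaled_law_bounded[of "entry_bound N" "replacement_pmf N i j" "sqrt (real N)"]
      matching_law_replacement_pmf[of i j N]
    by (simp add: replacement_def support_rate_def matching_law_def)
qed

lemma support_rate_lower_bound:
  "0 < support_rate N \<and> ln 2 / (1 + C1) * sqrt (real N) / ln (real N) \<le> support_rate N"
  using sqrt_div_max_one_ln_lower_bound[of "1 + C1" N] C1
  unfolding support_rate_def entry_bound_def by auto

end

theorem mainTheorem7:
  fixes mu :: "nat \<Rightarrow> nat \<Rightarrow> nat \<Rightarrow> real measure"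
    and C1 \<phi> :: real
  assumes wig: "gen_wigner mu"
    and C1: "C1 > 0"
    and int4: "\<And>N i j. i < j \<Longrightarrow> j < N \<Longrightarrow> integrable (mu N i j) (\<lambda>x. x ^ 4)"
    and diag2: "\<And>N i. i < N \<Longrightarrow> (\<integral>x. \<bar>x\<bar> ^ 2 \<partial>(mu N i i)) \<le> C1 / real N"
    and off2: "\<And>N i j. i < j \<Longrightarrow> j < N \<Longrightarrow> (\<integral>x. \<bar>x\<bar> ^ 2 \<partial>(mu N i j)) = 1 / real N"
    and off3: "\<And>N i j. i < j \<Longrightarrow> j < N \<Longrightarrow>
                 (\<integral>x. \<bar>x\<bar> ^ 3 \<partial>(mu N i j)) \<le> C1 * real N powr (-3/2)"
    and off4: "\<And>N i j. i < j \<Longrightarrow> j < N \<Longrightarrow>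
                 (\<integral>x. \<bar>x\<bar> ^ 4 \<partial>(mu N i j)) \<le> C1 * ln (real N) * real N powr (-2)"
    and phi: "\<phi> > 0"
    and bs: "bounded_support mu (\<lambda>N. real N powr \<phi>)"
  shows "\<exists>nu :: nat \<Rightarrow> nat \<Rightarrow> nat \<Rightarrow> real measure. \<exists>q :: nat \<Rightarrow> real. \<exists>c :: real.
           gen_wigner nu \<and> c > 0 \<and>
           (\<forall>N. q N > 0 \<and> q N \<ge> c * sqrt (real N) / ln (real N)) \<and>
           bounded_support nu q \<and>
           (\<forall>N i j. i < j \<and> j < N \<longrightarrow>
              integrable (nu N i j) (\<lambda>x. x ^ 4) \<and>
              (\<forall>k\<in>{1,2,3,4::nat}.
                 (\<integral>x. (sqrt (real N) * x) ^ k \<partial>(mu N i j))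
                 = (\<integral>x. (sqrt (real N) * x) ^ k \<partial>(nu N i j)))) \<and>
           (\<forall>N i. i < N \<longrightarrow>
              (\<forall>k\<in>{1,2::nat}.
                 (\<integral>x. (sqrt (real N) * x) ^ k \<partial>(mu N i i))
                 = (\<integral>x. (sqrt (real N) * x) ^ k \<partial>(nu N i i))))"
proof -
  interpret wigner_moment_bounds mu C1
    using wig C1 int4 diag2 off2 off4 by unfold_locales
  have "0 < ln 2 / (1 + C1)"
    using C1 by simp
  then show ?thesis
    using gen_wigner_replacement bounded_support_replacement support_rate_lower_bound
      replacement_moments integrable_replacement
    by (intro exI[of _ replacement] exI[of _ support_rate] exI[of _ "ln 2 / (1 + C1)"])
      (auto simp: matched_moment_orders_def)
qed

end
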